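(* Let $a\in\mathfrak{gl}(d,\mathbb{R})$ and let $K=\mathbb{R}\ltimes\mathbb{R}^d$ be the semi-direct product in which $t\in\mathbb{R}$ acts on $\mathbb{R}^d$ by $e^{ta}$, i.e. with group law $(t,v)(s,w)=(t+s,\,v+e^{ta}w)$. Let $\lambda_1,\dots,\lambda_l$ be the nonzero purely imaginary eigenvalues of $a$. If $t\notin\bigcup_{i=1}^{l}\frac{2\pi}{\lambda_i}\sqrt{-1}\,\mathbb{Z}$, then for every $v\in\mathbb{R}^d$ the element $(t,v)$ belongs to some one-parameter subgroup of $K$. *)

theory Defs
  imports "HOL-Analysis.Analysis"
begin

fun matpow :: "real^'n^'n \<Rightarrow> nat \<Rightarrow> real^'n^'n" where
  "matpow A 0 = mat 1"
| "matpow A (Suc k) = A ** matpow A k"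

definition mexp :: "real^'n^'n \<Rightarrow> real^'n^'n" where
  "mexp A = (\<Sum>k. (1 / fact k) *\<^sub>R matpow A k)"

definition kmul :: "real^'n^'n \<Rightarrow> real \<times> (real^'n) \<Rightarrow> real \<times> (real^'n) \<Rightarrow> real \<times> (real^'n)" where
  "kmul a x y = (fst x + fst y, snd x + mexp (fst x *\<^sub>R a) *v snd y)"

definition one_param_subgroup :: "real^'n^'n \<Rightarrow> (real \<Rightarrow> real \<times> (real^'n)) \<Rightarrow> bool" where
  "one_param_subgroup a \<phi> \<longleftrightarrow> continuous_on UNIV \<phi> \<and> (\<forall>s u. \<phi> (s + u) = kmul a (\<phi> s) (\<phi> u))"

definition cplx_eigenvalue :: "real^'n^'n \<Rightarrow> complex \<Rightarrow> bool" where
  "cplx_eigenvalue a c \<longleftrightarrow>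
     (\<exists>z :: complex^'n. z \<noteq> 0 \<and> (\<chi> i j. complex_of_real (a $ i $ j)) *v z = c *s z)"

end

theory Submission
  imports Defs "HOL-Computational_Algebra.Fundamental_Theorem_Algebra"
begin

(* With X = t a, the element (t, v) lies on s \<mapsto> (s t, F s y), where
   F s = \<integral>_0^s exp (r X) dr = \<Sum>k. s^(k+1)/(k+1)! X^k; this is a one-parameter subgroup
   because F (s + u) = F s + exp (s X) F u. It remains to choose y with F 1 y = v, i.e. to show
   that F 1 is invertible. Since F 1 commutes with a, a nonzero kernel of F 1 would contain a
   complex eigenvector of a, with eigenvalue \<mu> say, on which F 1 acts as the scalar
   (exp (t \<mu>) - 1) / (t \<mu>) (as 1 if t \<mu> = 0). This scalar vanishes only if
   t \<mu> \<in> 2 \<pi> \<i> \<int> - {0}, which the hypothesis excludes. *)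

section \<open>The integrated exponential in a Banach algebra\<close>

(* int_exp X s is the integral of exp (r X) from r = 0 to r = s. *)
definition int_exp :: "'a::{real_normed_algebra_1,banach} \<Rightarrow> real \<Rightarrow> 'a" where
  "int_exp X s = (\<Sum>k. (s ^ Suc k / fact (Suc k)) *\<^sub>R X ^ k)"

lemma norm_int_exp_term_le:
  fixes X :: "'a::{real_normed_algebra_1,banach}"
  shows "norm ((s ^ Suc k / fact (Suc k)) *\<^sub>R X ^ k) \<le> \<bar>s\<bar> * ((\<bar>s\<bar> * norm X) ^ k /\<^sub>R fact k)"
proof -
  have "norm ((s ^ Suc k / fact (Suc k)) *\<^sub>R X ^ k) = \<bar>s\<bar> ^ Suc k / fact (Suc k) * norm (X ^ k)"
    by (simp add: power_abs abs_mult)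
  also have "\<dots> \<le> \<bar>s\<bar> ^ Suc k / fact k * norm X ^ k"
  proof (rule mult_mono)
    show "\<bar>s\<bar> ^ Suc k / fact (Suc k) \<le> \<bar>s\<bar> ^ Suc k / fact k"
      by (rule divide_left_mono) (simp_all add: fact_mono)
  qed (simp_all add: norm_power_ineq)
  also have "\<dots> = \<bar>s\<bar> * ((\<bar>s\<bar> * norm X) ^ k /\<^sub>R fact k)"
    by (simp add: power_mult_distrib field_simps)
  finally show ?thesis .
qed

lemma summable_norm_int_exp:
  fixes X :: "'a::{real_normed_algebra_1,banach}"
  shows "summable (\<lambda>k. norm ((s ^ Suc k / fact (Suc k)) *\<^sub>R X ^ k))"
proof (rule summable_norm_comparison_test [OF exI, rule_format])
  show "summable (\<lambda>k. \<bar>s\<bar> * ((\<bar>s\<bar> * norm X) ^ k /\<^sub>R fact k))"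
    by (intro summable_mult summable_exp_generic)
  show "norm ((s ^ Suc k / fact (Suc k)) *\<^sub>R X ^ k) \<le> \<bar>s\<bar> * ((\<bar>s\<bar> * norm X) ^ k /\<^sub>R fact k)" for k
    by (rule norm_int_exp_term_le)
qed

lemma int_exp_sums:
  "(\<lambda>k. (s ^ Suc k / fact (Suc k)) *\<^sub>R X ^ k) sums int_exp X s"
  unfolding int_exp_def by (rule summable_sums[OF summable_norm_cancel[OF summable_norm_int_exp]])

lemma int_exp_0 [simp]: "int_exp 0 s = s *\<^sub>R 1"
proof -
  have "(\<lambda>k. (s ^ Suc k / fact (Suc k)) *\<^sub>R (0::'a) ^ k) sums (s *\<^sub>R 1)"
    using sums_single[of 0 "\<lambda>_. s *\<^sub>R (1::'a)"] by (simp add: power_0_left if_distrib cong: if_cong)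
  then show ?thesis using int_exp_sums sums_unique2 by blast
qed

lemma mult_int_exp: "X * int_exp X s = exp (s *\<^sub>R X) - 1"
proof -
  have shifted: "X * ((s ^ Suc k / fact (Suc k)) *\<^sub>R X ^ k) = (s *\<^sub>R X) ^ Suc k /\<^sub>R fact (Suc k)" for k
    by (simp add: divide_inverse_commute)
  have "(\<lambda>k. X * ((s ^ Suc k / fact (Suc k)) *\<^sub>R X ^ k)) sums (X * int_exp X s)"
    by (rule sums_mult[OF int_exp_sums])
  then have "(\<lambda>k. (s *\<^sub>R X) ^ Suc k /\<^sub>R fact (Suc k)) sums (X * int_exp X s)"
    by (simp only: shifted)
  moreover have "(\<lambda>k. (s *\<^sub>R X) ^ Suc k /\<^sub>R fact (Suc k)) sums (exp (s *\<^sub>R X) - 1)"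
    using exp_converges[of "s *\<^sub>R X"] by (subst sums_Suc_iff) simp
  ultimately show ?thesis by (rule sums_unique2)
qed

lemma int_exp_commute:
  assumes "Y * X = X * Y"
  shows "Y * int_exp X s = int_exp X s * Y"
proof -
  have "(\<lambda>k. Y * ((s ^ Suc k / fact (Suc k)) *\<^sub>R X ^ k)) sums (Y * int_exp X s)"
    by (intro sums_mult int_exp_sums)
  moreover have "(\<lambda>k. ((s ^ Suc k / fact (Suc k)) *\<^sub>R X ^ k) * Y) sums (int_exp X s * Y)"
    by (intro sums_mult2 int_exp_sums)
  moreover have "Y * X ^ k = X ^ k * Y" for k
    using assms by (simp add: power_commuting_commutes)
  ultimately show ?thesis using sums_unique2 by (simp add: mult_scaleR_right mult_scaleR_left)
qed

lemma exp_int_exp_Cauchy_coeff: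
  fixes s u :: real
  shows "(\<Sum>i\<le>n. s ^ i / fact i * (u ^ Suc (n - i) / fact (Suc (n - i))))
       = (s + u) ^ Suc n / fact (Suc n) - s ^ Suc n / fact (Suc n)"
proof -
  have "(s + u) ^ Suc n / fact (Suc n) = (\<Sum>i\<le>Suc n. s ^ i / fact i * (u ^ (Suc n - i) / fact (Suc n - i)))"
    using exp_series_add_commuting[of s u "Suc n"] by (simp add: divide_inverse mult.commute)
  also have "\<dots> = (\<Sum>i\<le>n. s ^ i / fact i * (u ^ Suc (n - i) / fact (Suc (n - i)))) + s ^ Suc n / fact (Suc n)"
    by (simp add: Suc_diff_le)
  finally show ?thesis by simp
qed

lemma int_exp_add: "int_exp X (s + u) = int_exp X s + exp (s *\<^sub>R X) * int_exp X u"
proof -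
  let ?a = "\<lambda>i. (s *\<^sub>R X) ^ i /\<^sub>R fact i" and ?b = "\<lambda>j. (u ^ Suc j / fact (Suc j)) *\<^sub>R X ^ j"
  have "?a i * ?b (n - i) = (s ^ i / fact i * (u ^ Suc (n - i) / fact (Suc (n - i)))) *\<^sub>R X ^ n"
    if "i \<le> n" for i n
  proof -
    have "X ^ i * X ^ (n - i) = X ^ n"
      using that by (simp flip: power_add)
    then show ?thesis
      by (simp add: divide_inverse_commute)
  qed
  then have "(\<Sum>i\<le>n. ?a i * ?b (n - i))
      = (\<Sum>i\<le>n. s ^ i / fact i * (u ^ Suc (n - i) / fact (Suc (n - i)))) *\<^sub>R X ^ n" for n
    by (simp add: scaleR_sum_left)
  then have Cauchy_coeff: "(\<Sum>i\<le>n. ?a i * ?b (n - i))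
      = ((s + u) ^ Suc n / fact (Suc n)) *\<^sub>R X ^ n - (s ^ Suc n / fact (Suc n)) *\<^sub>R X ^ n" for n
    by (simp only: exp_int_exp_Cauchy_coeff scaleR_diff_left)
  have "exp (s *\<^sub>R X) * int_exp X u = (\<Sum>n. \<Sum>i\<le>n. ?a i * ?b (n - i))"
    unfolding exp_def int_exp_def by (rule Cauchy_product[OF summable_norm_exp summable_norm_int_exp])
  also have "\<dots> = (\<Sum>n. ((s + u) ^ Suc n / fact (Suc n)) *\<^sub>R X ^ n - (s ^ Suc n / fact (Suc n)) *\<^sub>R X ^ n)"
    by (simp only: Cauchy_coeff)
  also have "\<dots> = int_exp X (s + u) - int_exp X s"
    by (rule sums_unique[symmetric], rule sums_diff[OF int_exp_sums int_exp_sums])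
  finally show ?thesis
    by simp
qed

lemma norm_int_exp_le: "norm (int_exp X u) \<le> \<bar>u\<bar> * exp (\<bar>u\<bar> * norm X)"
proof -
  have majorant: "(\<lambda>k. \<bar>u\<bar> * ((\<bar>u\<bar> * norm X) ^ k /\<^sub>R fact k)) sums (\<bar>u\<bar> * exp (\<bar>u\<bar> * norm X))"
    by (rule sums_mult[OF exp_converges])
  have "norm (int_exp X u) \<le> (\<Sum>k. \<bar>u\<bar> * ((\<bar>u\<bar> * norm X) ^ k /\<^sub>R fact k))"
    unfolding int_exp_def by (rule norm_suminf_le[OF norm_int_exp_term_le sums_summable[OF majorant]])
  also have "\<dots> = \<bar>u\<bar> * exp (\<bar>u\<bar> * norm X)"
    using majorant by (rule sums_unique[symmetric])
  finally show ?thesis .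
qed

lemma isCont_int_exp: "isCont (int_exp X) s"
proof -
  have "((\<lambda>u. \<bar>u\<bar> * exp (\<bar>u\<bar> * norm X)) \<longlongrightarrow> \<bar>0\<bar> * exp (\<bar>0\<bar> * norm X)) (at 0)"
    by (intro tendsto_intros)
  then have bound_to_0: "((\<lambda>u. \<bar>u\<bar> * exp (\<bar>u\<bar> * norm X)) \<longlongrightarrow> 0) (at 0)"
    by simp
  have "(int_exp X \<longlongrightarrow> 0) (at 0)"
    by (intro Lim_null_comparison[OF _ bound_to_0] always_eventually allI norm_int_exp_le)
  then have "((\<lambda>h. int_exp X s + exp (s *\<^sub>R X) * int_exp X h) \<longlongrightarrow> int_exp X s + 0) (at 0)"
    by (rule tendsto_add[OF tendsto_const tendsto_mult_right_zero])
  then have "((\<lambda>h. int_exp X (s + h)) \<longlongrightarrow> int_exp X s) (at 0)"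
    by (simp add: int_exp_add)
  then show ?thesis
    unfolding isCont_def by (rule LIM_offset_zero_cancel)
qed

section \<open>Eigenvectors in cyclic subspaces\<close>

definition poly_act :: "'a::field^'n^'n \<Rightarrow> 'a poly \<Rightarrow> 'a^'n \<Rightarrow> 'a^'n" where
  "poly_act A p x = (\<Sum>i\<le>degree p. coeff p i *s ((*v) A ^^ i) x)"

lemma poly_act_eq_sum:
  assumes "degree p < N"
  shows "poly_act A p x = (\<Sum>i<N. coeff p i *s ((*v) A ^^ i) x)"
  unfolding poly_act_def
  by (rule sum.mono_neutral_left) (use assms in \<open>auto simp: coeff_eq_0\<close>)

lemma poly_act_linear_factor:
  "poly_act A ([:-\<mu>, 1:] * q) x = A *v poly_act A q x - \<mu> *s poly_act A q x"
proof -
  let ?g = "\<lambda>i. ((*v) A ^^ i) x" and ?N = "Suc (degree q)"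
  have "degree ([:-\<mu>, 1:] * q) < Suc ?N"
    using degree_mult_le[of "[:-\<mu>, 1:]" q] by simp
  then have "poly_act A ([:-\<mu>, 1:] * q) x = (\<Sum>i<Suc ?N. coeff ([:-\<mu>, 1:] * q) i *s ?g i)"
    by (rule poly_act_eq_sum)
  also have "\<dots> = (\<Sum>i<Suc ?N. coeff (pCons 0 q) i *s ?g i) - \<mu> *s (\<Sum>i<Suc ?N. coeff q i *s ?g i)"
    by (simp add: mult_pCons_left vector_sadd_rdistrib vector_smult_lneg vec.scale_sum_right
        vector_smult_assoc sum.distrib sum_subtractf)
  also have "(\<Sum>i<Suc ?N. coeff (pCons 0 q) i *s ?g i) = (\<Sum>i<?N. coeff q i *s ?g (Suc i))"
    by (simp only: sum.lessThan_Suc_shift coeff_pCons_0 coeff_pCons_Suc vector_smult_lzero add_0)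
  also have "\<dots> = A *v (\<Sum>i<?N. coeff q i *s ?g i)"
    by (simp add: vec.sum vec.scale del: sum.lessThan_Suc)
  also have "(\<Sum>i<?N. coeff q i *s ?g i) = poly_act A q x"
    by (rule poly_act_eq_sum[symmetric]) simp
  also have "(\<Sum>i<Suc ?N. coeff q i *s ?g i) = poly_act A q x"
    by (rule poly_act_eq_sum[symmetric]) simp
  finally show ?thesis .
qed

lemma span_image_lessThan_imp_sum:
  fixes f :: "nat \<Rightarrow> 'a::field^'n"
  assumes "y \<in> vec.span (f ` {..<k})"
  shows "\<exists>c. y = (\<Sum>j<k. c j *s f j)"
  using assms
proof (induction k arbitrary: y)
  case 0
  then show ?case by simp
next
  case (Suc k)
  then obtain r where "y - r *s f k \<in> vec.span (f ` {..<k})"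
    by (auto simp: lessThan_Suc vec.span_insert)
  with Suc.IH obtain c where c: "y - r *s f k = (\<Sum>j<k. c j *s f j)"
    by blast
  have "y = (\<Sum>j<Suc k. (c(k := r)) j *s f j)"
    using c by (simp add: algebra_simps)
  then show ?case by blast
qed

lemma cyclic_vectors_dependent:
  fixes A :: "'a::field^'n^'n"
  shows "\<exists>k. ((*v) A ^^ k) x \<in> vec.span ((\<lambda>j. ((*v) A ^^ j) x) ` {..<k})"
proof (rule ccontr)
  let ?g = "\<lambda>j. ((*v) A ^^ j) x"
  assume "\<nexists>k. ?g k \<in> vec.span (?g ` {..<k})"
  then have "vec.dim (?g ` {..<k}) = k" for k
    by (induction k) (simp_all add: lessThan_Suc vec.dim_insert)
  then show False
    using vec.dim_subset[OF subset_UNIV, of "?g ` {..<Suc (vec.dim (UNIV :: ('a^'n) set))}"] by simp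
qed

lemma minimal_cyclic_dependence:
  fixes A :: "'a::field^'n^'n"
  assumes "x \<noteq> 0"
  obtains k c where "0 < k" "((*v) A ^^ k) x = (\<Sum>j<k. c j *s ((*v) A ^^ j) x)"
    and "\<And>j. j < k \<Longrightarrow> ((*v) A ^^ j) x \<notin> vec.span ((\<lambda>i. ((*v) A ^^ i) x) ` {..<j})"
proof -
  let ?g = "\<lambda>j. ((*v) A ^^ j) x"
  define k where "k = (LEAST k. ?g k \<in> vec.span (?g ` {..<k}))"
  have "?g k \<in> vec.span (?g ` {..<k})"
    unfolding k_def by (rule LeastI_ex) (rule cyclic_vectors_dependent)
  moreover have "?g j \<notin> vec.span (?g ` {..<j})" if "j < k" for j
    using that unfolding k_def by (rule not_less_Least)
  moreover have "0 < k"
  proof (rule ccontr)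
    assume "\<not> 0 < k"
    with \<open>?g k \<in> vec.span (?g ` {..<k})\<close> have "x \<in> vec.span {}"
      by simp
    with assms show False
      by (simp add: vec.span_empty)
  qed
  ultimately show thesis
    using that span_image_lessThan_imp_sum by blast
qed

lemma minimal_annihilating_polynomial:
  fixes A :: "'a::field^'n^'n"
  assumes "x \<noteq> 0"
  obtains p where "0 < degree p" "lead_coeff p = 1" "poly_act A p x = 0"
    and "\<And>j. j < degree p \<Longrightarrow> ((*v) A ^^ j) x \<notin> vec.span ((\<lambda>i. ((*v) A ^^ i) x) ` {..<j})"
proof -
  let ?g = "\<lambda>j. ((*v) A ^^ j) x"
  obtain k c where "0 < k" and dep: "?g k = (\<Sum>j<k. c j *s ?g j)"
    and indep: "\<And>j. j < k \<Longrightarrow> ?g j \<notin> vec.span (?g ` {..<j})"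
    using minimal_cyclic_dependence[OF assms] by blast
  define p where "p = monom 1 k - (\<Sum>j<k. monom (c j) j)"
  have coeff_p: "coeff p i = (if i = k then 1 else if i < k then - c i else 0)" for i
    by (auto simp: p_def coeff_sum coeff_monom)
  have "degree p = k"
    by (rule antisym[OF degree_le le_degree]) (auto simp: coeff_p)
  have "poly_act A p x = (\<Sum>i<Suc k. coeff p i *s ?g i)"
    by (rule poly_act_eq_sum) (simp add: \<open>degree p = k\<close>)
  also have "\<dots> = ?g k - (\<Sum>j<k. c j *s ?g j)"
    by (simp add: coeff_p vector_smult_lneg sum_negf)
  finally have "poly_act A p x = 0"
    by (simp add: dep)
  with \<open>degree p = k\<close> \<open>0 < k\<close> indep show thesis
    by (intro that) (auto simp: coeff_p)
qed

lemma eigenvector_in_cyclic_subspace: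
  fixes A :: "complex^'n^'n"
  assumes "x \<noteq> 0"
  obtains \<mu> y where "y \<noteq> 0" "A *v y = \<mu> *s y" "y \<in> vec.span (range (\<lambda>j. ((*v) A ^^ j) x))"
proof -
  let ?g = "\<lambda>j. ((*v) A ^^ j) x"
  obtain p where "0 < degree p" "lead_coeff p = 1" "poly_act A p x = 0"
    and indep: "\<And>j. j < degree p \<Longrightarrow> ?g j \<notin> vec.span (?g ` {..<j})"
    using minimal_annihilating_polynomial[OF assms] by blast
  obtain \<mu> where "poly p \<mu> = 0"
    using fundamental_theorem_of_algebra[of p] \<open>0 < degree p\<close> by (auto simp: constant_degree)
  define q where "q = synthetic_div p \<mu>"
  define k where "k = degree q"
  have p_q: "p = [:-\<mu>, 1:] * q"
    using synthetic_div_correct'[of \<mu> p] \<open>poly p \<mu> = 0\<close> by (simp add: q_def)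
  have "degree p = Suc k"
    using \<open>0 < degree p\<close> by (simp add: k_def q_def degree_synthetic_div)
  have "lead_coeff q = lead_coeff p"
    unfolding p_q lead_coeff_mult by simp
  define y where "y = poly_act A q x"
  have "A *v y - \<mu> *s y = poly_act A p x"
    unfolding y_def p_q by (rule poly_act_linear_factor[symmetric])
  with \<open>poly_act A p x = 0\<close> have "A *v y = \<mu> *s y"
    by simp
  moreover have "y \<noteq> 0"
  proof
    assume "y = 0"
    have "y = (\<Sum>i<Suc k. coeff q i *s ?g i)"
      unfolding y_def by (rule poly_act_eq_sum) (simp add: k_def)
    also have "\<dots> = ?g k + (\<Sum>i<k. coeff q i *s ?g i)"
      using \<open>lead_coeff q = lead_coeff p\<close> \<open>lead_coeff p = 1\<close> by (simp add: k_def)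
    finally have "?g k = - (\<Sum>i<k. coeff q i *s ?g i)"
      using \<open>y = 0\<close> by (simp add: eq_neg_iff_add_eq_0 add.commute)
    also have "\<dots> \<in> vec.span (?g ` {..<k})"
      by (intro vec.span_neg vec.span_sum vec.span_scale vec.span_base) auto
    finally show False
      using indep[of k] \<open>degree p = Suc k\<close> by simp
  qed
  moreover have "y \<in> vec.span (range ?g)"
    unfolding y_def poly_act_def by (intro vec.span_sum vec.span_scale vec.span_base) auto
  ultimately show thesis
    using that by blast
qed

lemma commuting_matrix_kills_cyclic_subspace:
  fixes M C :: "'a::field^'n^'n"
  assumes "M ** C = C ** M" and "M *v x = 0" and "y \<in> vec.span (range (\<lambda>j. ((*v) C ^^ j) x))"
  shows "M *v y = 0"
proof (rule vec.linear_eq_0_on_span[OF matrix_vector_mul_linear_gen _ assms(3)])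
  have "M *v (C *v w) = C *v (M *v w)" for w
    using assms(1) by (simp add: matrix_vector_mul_assoc)
  then have "M *v ((*v) C ^^ j) x = 0" for j
    using assms(2) by (induction j) simp_all
  then show "M *v z = 0" if "z \<in> range (\<lambda>j. ((*v) C ^^ j) x)" for z
    using that by blast
qed

section \<open>Real square matrices as a Banach algebra\<close>

(* With the operator norm, unlike the Euclidean norm of real^'n^'n (where norm (mat 1) = sqrt n),
   the matrices form a real_normed_algebra_1, so the library exponential exp applies to them. *)
typedef 'n sqmat = "UNIV :: (real^'n^'n) set"
  morphisms to_matrix of_matrix
  by simp

setup_lifting type_definition_sqmat

lemma matrix_add_rdistrib: "(A + B) ** C = A ** C + B ** C"
  by (vector matrix_matrix_mult_def sum.distrib[symmetric] field_simps)

instantiation sqmat :: (finite) ring_1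
begin

lift_definition zero_sqmat :: "'a sqmat" is 0 .
lift_definition one_sqmat :: "'a sqmat" is "mat 1" .
lift_definition plus_sqmat :: "'a sqmat \<Rightarrow> 'a sqmat \<Rightarrow> 'a sqmat" is "(+)" .
lift_definition minus_sqmat :: "'a sqmat \<Rightarrow> 'a sqmat \<Rightarrow> 'a sqmat" is "(-)" .
lift_definition uminus_sqmat :: "'a sqmat \<Rightarrow> 'a sqmat" is uminus .
lift_definition times_sqmat :: "'a sqmat \<Rightarrow> 'a sqmat \<Rightarrow> 'a sqmat" is "(**)" .

instance
proof
  show "(0::'a sqmat) \<noteq> 1"
    by transfer (simp add: vec_eq_iff mat_def)
qed (transfer; simp add: algebra_simps matrix_mul_assoc matrix_add_ldistrib matrix_add_rdistrib)+

end

instantiation sqmat :: (finite) real_algebra_1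
begin

lift_definition scaleR_sqmat :: "real \<Rightarrow> 'a sqmat \<Rightarrow> 'a sqmat" is scaleR .

instance
proof
  fix A B :: "'a sqmat" and r s :: real
  show "r *\<^sub>R (A + B) = r *\<^sub>R A + r *\<^sub>R B"
    by transfer (rule scaleR_right_distrib)
  show "(r + s) *\<^sub>R A = r *\<^sub>R A + s *\<^sub>R A"
    by transfer (rule scaleR_left_distrib)
  show "r *\<^sub>R s *\<^sub>R A = (r * s) *\<^sub>R A"
    by transfer simp
  show "1 *\<^sub>R A = A"
    by transfer simp
  show "r *\<^sub>R A * B = r *\<^sub>R (A * B)"
    by transfer (simp add: scalar_matrix_assoc)
  show "A * r *\<^sub>R B = r *\<^sub>R (A * B)"
    by transfer (simp add: matrix_scalar_ac scalar_matrix_assoc)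
qed

end

instantiation sqmat :: (finite) real_normed_algebra_1
begin

lift_definition norm_sqmat :: "'a sqmat \<Rightarrow> real" is "\<lambda>A. onorm ((*v) A)" .

definition sgn_sqmat :: "'a sqmat \<Rightarrow> 'a sqmat" where
  "sgn_sqmat A = A /\<^sub>R norm A"

definition dist_sqmat :: "'a sqmat \<Rightarrow> 'a sqmat \<Rightarrow> real" where
  "dist_sqmat A B = norm (A - B)"

definition uniformity_sqmat :: "('a sqmat \<times> 'a sqmat) filter" where
  "uniformity_sqmat = (INF e\<in>{0<..}. principal {(A, B). dist A B < e})"

definition open_sqmat :: "'a sqmat set \<Rightarrow> bool" where
  "open_sqmat U \<longleftrightarrow> (\<forall>A\<in>U. \<forall>\<^sub>F (A', B) in uniformity. A' = A \<longrightarrow> B \<in> U)"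

instance
proof
  fix A B :: "'a sqmat" and r :: real
  show "dist A B = norm (A - B)"
    by (simp add: dist_sqmat_def)
  show "sgn A = inverse (norm A) *\<^sub>R A"
    by (simp add: sgn_sqmat_def)
  show "(uniformity :: ('a sqmat \<times> 'a sqmat) filter) = (INF e\<in>{0<..}. principal {(A, B). dist A B < e})"
    by (simp add: uniformity_sqmat_def)
  show "open U \<longleftrightarrow> (\<forall>A\<in>U. \<forall>\<^sub>F (A', B) in uniformity. A' = A \<longrightarrow> B \<in> U)" for U :: "'a sqmat set"
    by (simp add: open_sqmat_def)
  show "norm A = 0 \<longleftrightarrow> A = 0"
    by transfer (simp add: onorm_eq_0 matrix_eq)
  show "norm (A + B) \<le> norm A + norm B"
  proof transfer
    fix A B :: "real^'a^'a"
    have "(*v) (A + B) = (\<lambda>x. A *v x + B *v x)"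
      by (simp add: fun_eq_iff matrix_vector_mult_add_rdistrib)
    then show "onorm ((*v) (A + B)) \<le> onorm ((*v) A) + onorm ((*v) B)"
      by (simp add: onorm_triangle)
  qed
  show "norm (r *\<^sub>R A) = \<bar>r\<bar> * norm A"
  proof transfer
    fix r :: real and A :: "real^'a^'a"
    have "(*v) (r *\<^sub>R A) = (\<lambda>x. r *\<^sub>R (A *v x))"
      by (simp add: fun_eq_iff scaleR_matrix_vector_assoc)
    then show "onorm ((*v) (r *\<^sub>R A)) = \<bar>r\<bar> * onorm ((*v) A)"
      by (simp add: onorm_scaleR)
  qed
  show "norm (A * B) \<le> norm A * norm B"
  proof transfer
    fix A B :: "real^'a^'a"
    have "(*v) (A ** B) = (*v) A \<circ> (*v) B"
      by (simp add: fun_eq_iff matrix_vector_mul_assoc)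
    then show "onorm ((*v) (A ** B)) \<le> onorm ((*v) A) * onorm ((*v) B)"
      by (simp add: onorm_compose)
  qed
  show "norm (1::'a sqmat) = 1"
  proof transfer
    have "(*v) (mat 1) = (\<lambda>x::real^'a. x)"
      by (simp add: fun_eq_iff)
    then show "onorm ((*v) (mat 1 :: real^'a^'a)) = 1"
      by (simp add: onorm_id)
  qed
qed

end

lemma norm_le_onorm_matrix:
  fixes A :: "real^'n^'m"
  shows "norm A \<le> real CARD('m) * real CARD('n) * onorm ((*v) A)"
proof -
  have "norm A \<le> (\<Sum>i\<in>UNIV. norm (A $ i))"
    by (simp add: norm_vec_def L2_set_le_sum)
  also have "\<dots> \<le> (\<Sum>i\<in>UNIV. \<Sum>j\<in>UNIV. \<bar>A $ i $ j\<bar>)"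
    by (intro sum_mono norm_le_l1_cart)
  also have "\<dots> \<le> (\<Sum>i\<in>(UNIV::'m set). \<Sum>j\<in>(UNIV::'n set). onorm ((*v) A))"
    by (intro sum_mono matrix_component_le_onorm)
  finally show ?thesis
    by simp
qed

lemma onorm_le_norm_matrix:
  fixes A :: "real^'n^'m"
  shows "onorm ((*v) A) \<le> real CARD('m) * real CARD('n) * norm A"
  by (rule onorm_le_matrix_component) (rule order_trans[OF component_le_norm_cart Finite_Cartesian_Product.norm_nth_le])

lemma bounded_linear_to_matrix: "bounded_linear (to_matrix :: 'n::finite sqmat \<Rightarrow> real^'n^'n)"
proof (rule bounded_linear_intro)
  show "norm (to_matrix A) \<le> norm A * (real CARD('n) * real CARD('n))" for A :: "'n sqmat"
    using norm_le_onorm_matrix[of "to_matrix A"] by (simp add: norm_sqmat.rep_eq mult.commute)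
qed (simp_all add: plus_sqmat.rep_eq scaleR_sqmat.rep_eq)

lemma bounded_linear_of_matrix: "bounded_linear (of_matrix :: real^'n^'n \<Rightarrow> 'n::finite sqmat)"
proof (rule bounded_linear_intro)
  show "norm (of_matrix A :: 'n sqmat) \<le> norm A * (real CARD('n) * real CARD('n))" for A :: "real^'n^'n"
    using onorm_le_norm_matrix[of A] by (simp add: norm_sqmat.abs_eq mult.commute)
qed (simp_all add: plus_sqmat.abs_eq scaleR_sqmat.abs_eq)

instance sqmat :: (finite) banach
proof
  fix X :: "nat \<Rightarrow> 'a sqmat"
  assume "Cauchy X"
  then have "Cauchy (\<lambda>n. to_matrix (X n))"
    by (rule bounded_linear.Cauchy[OF bounded_linear_to_matrix])
  then obtain L where "(\<lambda>n. to_matrix (X n)) \<longlonglongrightarrow> L"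
    using Cauchy_convergent_iff convergent_def by blast
  then have "(\<lambda>n. of_matrix (to_matrix (X n)) :: 'a sqmat) \<longlonglongrightarrow> of_matrix L"
    by (rule bounded_linear.tendsto[OF bounded_linear_of_matrix])
  then show "convergent X"
    by (auto simp: convergent_def to_matrix_inverse)
qed

lemma to_matrix_power: "to_matrix (X ^ k) = matpow (to_matrix X) k"
  by (induction k) (simp_all add: one_sqmat.rep_eq times_sqmat.rep_eq)

lemma mexp_eq_exp: "mexp A = to_matrix (exp (of_matrix A))"
proof -
  have "(\<lambda>k. to_matrix (of_matrix A ^ k /\<^sub>R fact k)) sums to_matrix (exp (of_matrix A))"
    by (rule bounded_linear.sums[OF bounded_linear_to_matrix exp_converges])
  then show ?thesis
    by (simp add: mexp_def sums_iff scaleR_sqmat.rep_eq to_matrix_power of_matrix_inverse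
        inverse_eq_divide)
qed

lemma bounded_linear_matrix_vector_mult_left: "bounded_linear (\<lambda>A::real^'n^'m. A *v x)"
proof -
  have "linear (\<lambda>A::real^'n^'m. A *v x)"
    by (rule linearI) (simp_all add: matrix_vector_mult_add_rdistrib scaleR_matrix_vector_assoc)
  then show ?thesis
    by (simp add: linear_conv_bounded_linear)
qed

lemma one_param_subgroup_int_exp:
  fixes a :: "real^'n^'n"
  shows "one_param_subgroup a (\<lambda>s. (s * t, to_matrix (int_exp (of_matrix (t *\<^sub>R a)) s) *v y))"
  unfolding one_param_subgroup_def
proof (intro conjI allI)
  let ?X = "of_matrix (t *\<^sub>R a) :: 'n sqmat"
  have "bounded_linear (\<lambda>X. to_matrix X *v y)"
    by (rule bounded_linear_compose[OF bounded_linear_matrix_vector_mult_left bounded_linear_to_matrix])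
  then have "isCont (\<lambda>s. to_matrix (int_exp ?X s) *v y) s" for s
    by (rule bounded_linear.isCont[OF _ isCont_int_exp])
  then show "continuous_on UNIV (\<lambda>s. (s * t, to_matrix (int_exp ?X s) *v y))"
    by (intro continuous_at_imp_continuous_on ballI isCont_Pair) (auto intro: continuous_intros)
  fix s u :: real
  have "of_matrix ((s * t) *\<^sub>R a) = s *\<^sub>R ?X"
    by (simp add: scaleR_sqmat.abs_eq)
  then have "mexp ((s * t) *\<^sub>R a) = to_matrix (exp (s *\<^sub>R ?X))"
    by (simp add: mexp_eq_exp)
  then show "((s + u) * t, to_matrix (int_exp ?X (s + u)) *v y)
      = kmul a (s * t, to_matrix (int_exp ?X s) *v y) (u * t, to_matrix (int_exp ?X u) *v y)"
    by (simp add: kmul_def int_exp_add plus_sqmat.rep_eq times_sqmat.rep_eq algebra_simps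
        matrix_vector_mul_assoc)
qed

section \<open>Invertibility of the integrated exponential\<close>

definition complex_mat :: "real^'n^'m \<Rightarrow> complex^'n^'m" where
  "complex_mat A = (\<chi> i j. complex_of_real (A $ i $ j))"

definition complex_vec :: "real^'n \<Rightarrow> complex^'n" where
  "complex_vec x = (\<chi> i. complex_of_real (x $ i))"

lemma complex_mat_mult: "complex_mat (A ** B) = complex_mat A ** complex_mat B"
  by (simp add: complex_mat_def matrix_matrix_mult_def vec_eq_iff)

lemma complex_mat_mult_vec: "complex_mat A *v complex_vec x = complex_vec (A *v x)"
  by (simp add: complex_mat_def complex_vec_def matrix_vector_mult_def vec_eq_iff)

lemma complex_vec_eq_0_iff [simp]: "complex_vec x = 0 \<longleftrightarrow> x = 0"
  by (simp add: complex_vec_def vec_eq_iff)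

lemma complex_mat_matpow_eigenvector:
  fixes A :: "real^'n^'n"
  assumes "complex_mat A *v y = \<mu> *s y"
  shows "complex_mat (matpow A k) *v y = \<mu> ^ k *s y"
proof (induction k)
  case 0
  have "complex_mat (mat 1) = (mat 1 :: complex^'n^'n)"
    by (simp add: complex_mat_def mat_def vec_eq_iff)
  then show ?case
    by simp
qed (simp add: complex_mat_mult matrix_vector_mul_assoc[symmetric] vec.scale vector_smult_assoc
    assms mult.commute)

lemma int_exp_matrix_eigenvector:
  fixes A :: "real^'n^'n"
  assumes "complex_mat A *v y = \<mu> *s y"
  shows "complex_mat (to_matrix (int_exp (of_matrix A) s)) *v y = int_exp \<mu> s *s y"
proof -
  define L where "L B = complex_mat B *v y" for B :: "real^'n^'n"
  have "linear L"
    by (rule linearI) (simp_all add: L_def complex_mat_def matrix_vector_mult_def vec_eq_iff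
        sum.distrib distrib_right scaleR_conv_of_real[where 'a=complex] sum_distrib_left mult.assoc)
  have scaleR_smult: "(r *\<^sub>R z) *s v = r *\<^sub>R (z *s v)" for r and z :: complex and v :: "complex^'n"
    by (simp add: vec_eq_iff scaleR_conv_of_real[where 'a=complex] mult.assoc)
  have L_term: "L (to_matrix (c *\<^sub>R of_matrix A ^ k)) = (c *\<^sub>R \<mu> ^ k) *s y" for c k
    using linear_scale[OF \<open>linear L\<close>, of c "matpow A k"] complex_mat_matpow_eigenvector[OF assms, of k]
    by (simp add: L_def scaleR_sqmat.rep_eq to_matrix_power of_matrix_inverse scaleR_smult)
  have "bounded_linear (\<lambda>X. L (to_matrix X))"
    using \<open>linear L\<close> by (intro bounded_linear_compose[OF _ bounded_linear_to_matrix])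
      (simp add: linear_conv_bounded_linear)
  from bounded_linear.sums[OF this int_exp_sums[of s "of_matrix A"]]
  have "(\<lambda>k. ((s ^ Suc k / fact (Suc k)) *\<^sub>R \<mu> ^ k) *s y) sums L (to_matrix (int_exp (of_matrix A) s))"
    by (simp only: L_term)
  moreover have "linear (\<lambda>z::complex. z *s y)"
    by (rule linearI) (simp_all add: vector_sadd_rdistrib scaleR_smult)
  then have "bounded_linear (\<lambda>z::complex. z *s y)"
    by (simp add: linear_conv_bounded_linear)
  then have "(\<lambda>k. ((s ^ Suc k / fact (Suc k)) *\<^sub>R \<mu> ^ k) *s y) sums (int_exp \<mu> s *s y)"
    by (rule bounded_linear.sums[OF _ int_exp_sums])
  ultimately show ?thesis
    unfolding L_def by (rule sums_unique2)
qed

lemma to_matrix_int_exp_commute: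
  "a ** to_matrix (int_exp (of_matrix (t *\<^sub>R a)) s) = to_matrix (int_exp (of_matrix (t *\<^sub>R a)) s) ** a"
proof -
  have "of_matrix a * of_matrix (t *\<^sub>R a) = of_matrix (t *\<^sub>R a) * of_matrix a"
    by transfer (simp add: matrix_scalar_ac scalar_matrix_assoc)
  then have "of_matrix a * int_exp (of_matrix (t *\<^sub>R a)) s = int_exp (of_matrix (t *\<^sub>R a)) s * of_matrix a"
    by (rule int_exp_commute)
  then have "to_matrix (of_matrix a * int_exp (of_matrix (t *\<^sub>R a)) s)
      = to_matrix (int_exp (of_matrix (t *\<^sub>R a)) s * of_matrix a)"
    by (rule arg_cong)
  then show ?thesis
    by (simp add: times_sqmat.rep_eq of_matrix_inverse)
qed

lemma int_exp_matrix_kernel: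
  fixes a :: "real^'n^'n"
  assumes "to_matrix (int_exp (of_matrix (t *\<^sub>R a)) 1) *v x = 0" and "x \<noteq> 0"
  obtains \<mu> where "cplx_eigenvalue a \<mu>" "exp (complex_of_real t * \<mu>) = 1" "complex_of_real t * \<mu> \<noteq> 0"
proof -
  let ?C = "complex_mat a"
  define M where "M = complex_mat (to_matrix (int_exp (of_matrix (t *\<^sub>R a)) 1))"
  have "complex_vec x \<noteq> 0"
    using assms(2) by simp
  then obtain \<mu> y where "y \<noteq> 0" "?C *v y = \<mu> *s y"
    and y_cyclic: "y \<in> vec.span (range (\<lambda>j. ((*v) ?C ^^ j) (complex_vec x)))"
    by (rule eigenvector_in_cyclic_subspace)
  have "M *v y = 0"
  proof (rule commuting_matrix_kills_cyclic_subspace[OF _ _ y_cyclic])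
    show "M ** ?C = ?C ** M"
      by (simp add: M_def complex_mat_mult[symmetric] to_matrix_int_exp_commute)
    show "M *v complex_vec x = 0"
      by (simp add: M_def complex_mat_mult_vec assms(1))
  qed
  moreover have "complex_mat (t *\<^sub>R a) *v y = complex_of_real t *s (?C *v y)"
    by (simp add: complex_mat_def matrix_vector_mult_def vec_eq_iff sum_distrib_left mult.assoc)
  then have "M *v y = int_exp (complex_of_real t * \<mu>) 1 *s y"
    unfolding M_def by (intro int_exp_matrix_eigenvector) (simp add: \<open>?C *v y = \<mu> *s y\<close> vector_smult_assoc)
  ultimately have "int_exp (complex_of_real t * \<mu>) 1 = 0"
    using \<open>y \<noteq> 0\<close> by simp
  with mult_int_exp[of "complex_of_real t * \<mu>" 1]
  have "exp (complex_of_real t * \<mu>) = 1" and "complex_of_real t * \<mu> \<noteq> 0"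
    by auto
  moreover have "cplx_eigenvalue a \<mu>"
    unfolding cplx_eigenvalue_def using \<open>y \<noteq> 0\<close> \<open>?C *v y = \<mu> *s y\<close> by (auto simp: complex_mat_def)
  ultimately show thesis
    using that by blast
qed

lemma exp_eq_1_resonance:
  assumes "exp (complex_of_real t * \<mu>) = 1" and "complex_of_real t * \<mu> \<noteq> 0"
  shows "Re \<mu> = 0" "\<mu> \<noteq> 0"
    and "complex_of_real t \<in> {(2 * complex_of_real pi / \<mu>) * \<i> * of_int k | k :: int. True}"
proof -
  obtain n :: int where "Re (complex_of_real t * \<mu>) = 0" "Im (complex_of_real t * \<mu>) = of_int (2 * n) * pi"
    using assms(1) exp_eq_1 by blast
  then have tmu: "complex_of_real t * \<mu> = 2 * complex_of_real pi * \<i> * of_int n"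
    by (simp add: complex_eq_iff)
  show "\<mu> \<noteq> 0" and "Re \<mu> = 0"
    using assms(2) \<open>Re (complex_of_real t * \<mu>) = 0\<close> by auto
  then have "complex_of_real t = (2 * complex_of_real pi / \<mu>) * \<i> * of_int n"
    using tmu by (simp add: field_simps)
  then show "complex_of_real t \<in> {(2 * complex_of_real pi / \<mu>) * \<i> * of_int k | k :: int. True}"
    by blast
qed

theorem lemma8p1:
  fixes a :: "real^'n^'n" and t :: real and v :: "real^'n"
  assumes "\<forall>c. (cplx_eigenvalue a c \<and> Re c = 0 \<and> c \<noteq> 0) \<longrightarrow>
             complex_of_real t \<notin> {(2 * complex_of_real pi / c) * \<i> * of_int k | k :: int. True}"
  shows "\<exists>\<phi>. one_param_subgroup a \<phi> \<and> (t, v) \<in> range \<phi>"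
proof -
  define M where "M = to_matrix (int_exp (of_matrix (t *\<^sub>R a)) 1)"
  have "x = 0" if "M *v x = 0" for x
  proof (rule ccontr)
    assume "x \<noteq> 0"
    with \<open>M *v x = 0\<close> obtain \<mu> where "cplx_eigenvalue a \<mu>"
      and "exp (complex_of_real t * \<mu>) = 1" "complex_of_real t * \<mu> \<noteq> 0"
      unfolding M_def by (rule int_exp_matrix_kernel)
    with assms show False
      using exp_eq_1_resonance by blast
  qed
  then have "surj ((*v) M)"
    by (intro linear_injective_imp_surjective) (auto simp: linear_inj_iff_eq_0)
  then obtain y where "M *v y = v"
    by (metis surjD)
  then have "(t, v) = (\<lambda>s. (s * t, to_matrix (int_exp (of_matrix (t *\<^sub>R a)) s) *v y)) 1"
    by (simp add: M_def)
  then show ?thesis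
    using one_param_subgroup_int_exp by blast
qed

end
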